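(* Let $X$ be a nodal toric Fano threefold and $\widetilde{X}\to X$ a small crepant toric resolution. Then there is an exact sequence $$0\longrightarrow\operatorname{Pic}(X)\longrightarrow\operatorname{Pic}(\widetilde{X})\xrightarrow{\ \phi\ }\bigoplus_{ABCD}\mathbb{Z},$$ where the sum runs over all quadrangular faces $\rho_A\rho_B\rho_C\rho_D$ (vertices in cyclic order) of the fan polytope of $X$, $\phi=\oplus_{ABCD}\phi_{ABCD}$, and $\phi_{ABCD}\big(\sum_\rho a_\rho D_\rho\big)=a_{\rho_A}-a_{\rho_B}+a_{\rho_C}-a_{\rho_D}$.
   Context: The fan polytope is the convex hull of the primitive ray generators; quadrangular faces correspond to the nodes of $X$. $D_\rho$ is the torus-invariant prime divisor of the ray $\rho$; since the resolution is small, torus-invariant Weil divisors on $X$ and $\widetilde{X}$ are identified, and $\operatorname{Pic}(X)\to\operatorname{Pic}(\widetilde{X})$ is pullback. *)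

theory Defs
  imports "HOL-Analysis.Analysis" "HOL-Algebra.Algebra"
begin

text \<open>Lattice N = int^3; its real span real^3.  Ray generators are lattice points.\<close>

definition rv :: "int^3 \<Rightarrow> real^3" where
  "rv v = (\<chi> i. real_of_int (v $ i))"

definition ipair :: "int^3 \<Rightarrow> int^3 \<Rightarrow> int" where
  "ipair m v = (\<Sum>i\<in>UNIV. m $ i * v $ i)"

definition primitive :: "int^3 \<Rightarrow> bool" where
  "primitive v \<longleftrightarrow> (\<forall>k::int. (\<forall>i. k dvd v $ i) \<longrightarrow> is_unit k)"

definition unimodular3 :: "int^3 \<Rightarrow> int^3 \<Rightarrow> int^3 \<Rightarrow> bool" where
  "unimodular3 a b c \<longleftrightarrow> det (vector [a, b, c] :: int^3^3) \<in> {1, -1}"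

definition fan_poly :: "(int^3) set \<Rightarrow> (real^3) set" where
  "fan_poly V = convex hull (rv ` V)"

text \<open>Ray generators lying on a face (= vertices of the face, since all of V are vertices).\<close>
definition verts :: "(int^3) set \<Rightarrow> (real^3) set \<Rightarrow> (int^3) set" where
  "verts V F = {v \<in> V. rv v \<in> F}"

definition smooth_tri :: "(int^3) set \<Rightarrow> (real^3) set \<Rightarrow> bool" where
  "smooth_tri V F \<longleftrightarrow> (\<exists>a\<in>V. \<exists>b\<in>V. \<exists>c\<in>V.
      F = convex hull (rv ` {a, b, c}) \<and> unimodular3 a b c)"

text \<open>Cone over a quadrangle which is an ordinary double point:
  GL(3,Z)-equivalent to the cone spanned by e1, e3, e2, e1+e2-e3.\<close>
definition node_quad :: "(int^3) set \<Rightarrow> (real^3) set \<Rightarrow> bool" where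
  "node_quad V F \<longleftrightarrow> (\<exists>a\<in>V. \<exists>b\<in>V. \<exists>c\<in>V. \<exists>d\<in>V.
      F = convex hull (rv ` {a, b, c, d}) \<and> a + c = b + d \<and> unimodular3 a b c)"

text \<open>A nodal toric Fano threefold, given by the set V of primitive ray generators of its fan;
  the fan is the face fan of the fan polytope, all ray generators are vertices of it,
  and every maximal cone is smooth or an ordinary double point.\<close>
definition nodal_toric_fano3 :: "(int^3) set \<Rightarrow> bool" where
  "nodal_toric_fano3 V \<longleftrightarrow> finite V \<and> 0 \<in> interior (fan_poly V) \<and>
     (\<forall>v\<in>V. primitive v \<and> rv v extreme_point_of fan_poly V) \<and>
     (\<forall>F. F facet_of fan_poly V \<longrightarrow> smooth_tri V F \<or> node_quad V F)"

text \<open>Maximal cones of the fan of X, each given by its set of ray generators.\<close>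
definition cones_X :: "(int^3) set \<Rightarrow> (int^3) set set" where
  "cones_X V = {verts V F | F. F facet_of fan_poly V}"

text \<open>A small (no new rays, hence crepant) toric resolution, given by its maximal cones:
  a triangulation of the boundary of the fan polytope using only the vertices, refining
  the facets.\<close>
definition small_res :: "(int^3) set \<Rightarrow> (int^3) set set \<Rightarrow> bool" where
  "small_res V S \<longleftrightarrow>
     (\<forall>\<sigma>\<in>S. card \<sigma> = 3 \<and> (\<exists>F. F facet_of fan_poly V \<and> \<sigma> \<subseteq> verts V F)) \<and>
     (\<forall>F. F facet_of fan_poly V \<longrightarrow>
         F = \<Union>{convex hull (rv ` \<sigma>) | \<sigma>. \<sigma> \<in> S \<and> \<sigma> \<subseteq> verts V F}) \<and>
     (\<forall>\<sigma>\<in>S. \<forall>\<tau>\<in>S. \<sigma> \<noteq> \<tau> \<longrightarrow>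
         convex hull (rv ` \<sigma>) \<inter> convex hull (rv ` \<tau>) = convex hull (rv ` (\<sigma> \<inter> \<tau>)))"

text \<open>Torus-invariant Weil divisors sum a_rho D_rho are functions a with support in V.
  Cartier divisors on a fan with maximal cones C: locally given by a character.\<close>
definition cdiv :: "(int^3) set \<Rightarrow> (int^3) set set \<Rightarrow> (int^3 \<Rightarrow> int) set" where
  "cdiv V C = {a. (\<forall>x. x \<notin> V \<longrightarrow> a x = 0) \<and>
                  (\<forall>\<sigma>\<in>C. \<exists>m. \<forall>v\<in>\<sigma>. a v = ipair m v)}"

definition princ :: "(int^3) set \<Rightarrow> (int^3 \<Rightarrow> int) set" where
  "princ V = {a. (\<forall>x. x \<notin> V \<longrightarrow> a x = 0) \<and> (\<exists>m. \<forall>v\<in>V. a v = ipair m v)}"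

definition cdiv_grp :: "(int^3) set \<Rightarrow> (int^3) set set \<Rightarrow> (int^3 \<Rightarrow> int) monoid" where
  "cdiv_grp V C = \<lparr>carrier = cdiv V C, mult = (\<lambda>a b x. a x + b x), one = (\<lambda>_. 0)\<rparr>"

definition pic :: "(int^3) set \<Rightarrow> (int^3) set set \<Rightarrow> (int^3 \<Rightarrow> int) set monoid" where
  "pic V C = cdiv_grp V C Mod princ V"

definition quads :: "(int^3) set \<Rightarrow> (real^3) set set" where
  "quads V = {F. F facet_of fan_poly V \<and> card (verts V F) = 4}"

text \<open>lab F = (A,B,C,D): the vertices of the quadrangle F in cyclic order.\<close>
definition cyclic_labelling :: "(int^3) set \<Rightarrow> ((real^3) set \<Rightarrow> (int^3) \<times> (int^3) \<times> (int^3) \<times> (int^3)) \<Rightarrow> bool" where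
  "cyclic_labelling V lab \<longleftrightarrow> (\<forall>F\<in>quads V. case lab F of (A, B, C, D) \<Rightarrow>
       verts V F = {A, B, C, D} \<and> A + C = B + D)"

definition zquads :: "(int^3) set \<Rightarrow> ((real^3) set \<Rightarrow> int) monoid" where
  "zquads V = \<lparr>carrier = {f. \<forall>F. F \<notin> quads V \<longrightarrow> f F = 0}, mult = (\<lambda>f g F. f F + g F), one = (\<lambda>_. 0)\<rparr>"

definition phi0 :: "(int^3) set \<Rightarrow> ((real^3) set \<Rightarrow> (int^3) \<times> (int^3) \<times> (int^3) \<times> (int^3))
                    \<Rightarrow> (int^3 \<Rightarrow> int) \<Rightarrow> (real^3) set \<Rightarrow> int" where
  "phi0 V lab a = (\<lambda>F. if F \<in> quads V then
       (case lab F of (A, B, C, D) \<Rightarrow> a A - a B + a C - a D) else 0)"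

definition phi :: "(int^3) set \<Rightarrow> ((real^3) set \<Rightarrow> (int^3) \<times> (int^3) \<times> (int^3) \<times> (int^3))
                    \<Rightarrow> (int^3 \<Rightarrow> int) set \<Rightarrow> (real^3) set \<Rightarrow> int" where
  "phi V lab cls = phi0 V lab (SOME a. a \<in> cls)"

end

theory Submission
  imports Defs
begin

text \<open>A torus-invariant divisor \<open>\<Sum> a\<^sub>\<rho> D\<^sub>\<rho>\<close> is Cartier on a cone iff its coefficients
  on the ray generators are the values of one character m.  On a smooth triangle the
  generators form a lattice basis, so any coefficients are such values.  On a node cone
  with a + c = b + d the generators a, b, c are a basis and d = a + c - b, so the
  coefficients extend iff \<open>a\<^sub>a + a\<^sub>c = a\<^sub>b + a\<^sub>d\<close>; for any cyclic labelling of the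
  quadrangle this is \<open>\<phi>\<^sub>A\<^sub>B\<^sub>C\<^sub>D = 0\<close>, since A + C = B + D forces {A, C} to be a diagonal.
  Hence the Cartier divisors of X are exactly those of the resolution killed by \<open>\<phi>\<close>,
  and as both Picard groups are quotients by the same principal divisors, Pic(X) is
  literally the subgroup ker \<open>\<phi>\<close> of the Picard group of the resolution.\<close>

lemma ipair_add_right: "ipair m (x + y) = ipair m x + ipair m y"
  by (simp add: ipair_def sum.distrib algebra_simps)

lemma ipair_add_left: "ipair (m + n) v = ipair m v + ipair n v"
  by (simp add: ipair_def sum.distrib algebra_simps)

lemma ipair_scale_left: "ipair (k *s m) v = k * ipair m v"
  by (simp add: ipair_def sum_distrib_left algebra_simps)

lemma ipair_node_relation:
  assumes "a + c = b + d"
  shows "ipair m a + ipair m c = ipair m b + ipair m d"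
  by (metis assms ipair_add_right)

definition int_cross :: "int^3 \<Rightarrow> int^3 \<Rightarrow> int^3" where
  "int_cross u v = vector [u $ 2 * v $ 3 - u $ 3 * v $ 2, u $ 3 * v $ 1 - u $ 1 * v $ 3,
                           u $ 1 * v $ 2 - u $ 2 * v $ 1]"

text \<open>The cross products of two of the vectors a, b, c pair with the third to
  det [a, b, c] = \<plusminus>1 and with the other two to 0, so they form the dual basis up to sign.\<close>

lemma unimodular3_interpolate:
  assumes "unimodular3 a b c"
  shows "\<exists>m. ipair m a = x \<and> ipair m b = y \<and> ipair m c = z"
proof -
  define D where "D = det (vector [a, b, c] :: int^3^3)"
  have "D * D = 1"
    using assms unfolding unimodular3_def D_def[symmetric] by auto
  have dual:
    "ipair (int_cross b c) a = D" "ipair (int_cross c a) a = 0" "ipair (int_cross a b) a = 0"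
    "ipair (int_cross b c) b = 0" "ipair (int_cross c a) b = D" "ipair (int_cross a b) b = 0"
    "ipair (int_cross b c) c = 0" "ipair (int_cross c a) c = 0" "ipair (int_cross a b) c = D"
    unfolding D_def ipair_def int_cross_def det_3 sum_3 by (simp_all add: algebra_simps)
  define m where "m = (D * x) *s int_cross b c + (D * y) *s int_cross c a + (D * z) *s int_cross a b"
  have "ipair m a = x" "ipair m b = y" "ipair m c = z"
    unfolding m_def ipair_add_left ipair_scale_left dual using \<open>D * D = 1\<close>
    by (simp_all add: algebra_simps)
  then show ?thesis by blast
qed

lemma node_quad_distinct:
  assumes "unimodular3 a b c" "a + c = b + d"
  shows "distinct [a, b, c, d]"
proof -
  obtain m where m: "ipair m a = 1" "ipair m b = 2" "ipair m c = 4"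
    using unimodular3_interpolate[OF assms(1)] by blast
  then have "ipair m d = 3"
    using ipair_node_relation[OF assms(2), of m] by simp
  with m show ?thesis by auto
qed

lemma node_quad_alternating_sum_eq_0_iff:
  fixes f :: "int^3 \<Rightarrow> int"
  assumes "unimodular3 a b c" "a + c = b + d"
    and "{A, B, C, D} = {a, b, c, d}" "A + C = B + D"
  shows "f A - f B + f C - f D = 0 \<longleftrightarrow> f a + f c = f b + f d"
proof -
  \<comment> \<open>g is 0 on the diagonal a, c and 1, -1 on b, d, so only a diagonal pair
    can play the role of A, C.\<close>
  obtain g where g: "ipair g a = 0" "ipair g b = 1" "ipair g c = 0"
    using unimodular3_interpolate[OF assms(1)] by blast
  then have "ipair g d = -1"
    using ipair_node_relation[OF assms(2), of g] by simp
  have "distinct [A, B, C, D]"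
    using node_quad_distinct[OF assms(1,2)] assms(3)
    by (intro card_distinct) (simp add: distinct_card[symmetric])
  moreover have "ipair g A + ipair g C = ipair g B + ipair g D"
    using ipair_node_relation[OF assms(4)] .
  moreover have "A \<in> {a, b, c, d}" "B \<in> {a, b, c, d}" "C \<in> {a, b, c, d}" "D \<in> {a, b, c, d}"
    using assms(3) by blast+
  ultimately show ?thesis
    using g \<open>ipair g d = -1\<close> by (elim insertE emptyE) auto
qed

lemma linear_on_node_quad_iff:
  fixes f :: "int^3 \<Rightarrow> int"
  assumes "unimodular3 a b c" "a + c = b + d"
  shows "(\<exists>m. \<forall>v\<in>{a, b, c, d}. f v = ipair m v) \<longleftrightarrow> f a + f c = f b + f d"
proof
  assume "\<exists>m. \<forall>v\<in>{a, b, c, d}. f v = ipair m v"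
  then obtain m where "\<forall>v\<in>{a, b, c, d}. f v = ipair m v" ..
  then show "f a + f c = f b + f d"
    using ipair_node_relation[OF assms(2), of m] by simp
next
  assume f: "f a + f c = f b + f d"
  obtain m where m: "ipair m a = f a" "ipair m b = f b" "ipair m c = f c"
    using unimodular3_interpolate[OF assms(1)] by blast
  then have "ipair m d = f d"
    using f ipair_node_relation[OF assms(2), of m] by simp
  with m show "\<exists>m. \<forall>v\<in>{a, b, c, d}. f v = ipair m v"
    by (intro exI[of _ m]) auto
qed

lemma verts_convex_hull:
  assumes "\<forall>v\<in>V. rv v extreme_point_of fan_poly V" "T \<subseteq> V"
  shows "verts V (convex hull (rv ` T)) = T"
proof
  show "T \<subseteq> verts V (convex hull (rv ` T))"
    using assms(2) by (auto simp: verts_def hull_inc)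
  show "verts V (convex hull (rv ` T)) \<subseteq> T"
  proof
    fix v assume "v \<in> verts V (convex hull (rv ` T))"
    then have v: "v \<in> V" "rv v \<in> convex hull (rv ` T)"
      by (auto simp: verts_def)
    have "convex hull (rv ` T) \<subseteq> fan_poly V"
      unfolding fan_poly_def using assms(2) by (intro hull_mono) blast
    then have "rv v extreme_point_of convex hull (rv ` T)"
      using assms(1) v unfolding extreme_point_of_def by blast
    then have "rv v \<in> rv ` T"
      by (rule extreme_point_of_convex_hull)
    moreover have "inj rv"
      by (auto intro!: injI simp: rv_def vec_eq_iff)
    ultimately show "v \<in> T"
      by (simp add: inj_image_mem_iff)
  qed
qed

lemma alternating_sum_linear:
  assumes "A + C = B + D"
  shows "ipair m A - ipair m B + ipair m C - ipair m D = 0"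
  using ipair_node_relation[OF assms, of m] by simp

lemma phi0_eq_0_if_linear:
  assumes "cyclic_labelling V lab"
    and "\<And>F. F \<in> quads V \<Longrightarrow> \<exists>m. \<forall>v\<in>verts V F. f v = ipair m v"
  shows "phi0 V lab f = (\<lambda>_. 0)"
proof
  fix F
  show "phi0 V lab f F = 0"
  proof (cases "F \<in> quads V")
    case True
    obtain A B C D where ABCD: "lab F = (A, B, C, D)"
      by (metis prod_cases4)
    with assms(1) True have "verts V F = {A, B, C, D}" "A + C = B + D"
      unfolding cyclic_labelling_def by fastforce+
    moreover obtain m where "\<forall>v\<in>verts V F. f v = ipair m v"
      using assms(2) True by blast
    ultimately show ?thesis
      using True ABCD alternating_sum_linear[of A C B D m] by (simp add: phi0_def)
  qed (simp add: phi0_def)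
qed

lemma facet_linear_iff_phi0:
  fixes f :: "int^3 \<Rightarrow> int"
  assumes fano: "nodal_toric_fano3 V" and labelling: "cyclic_labelling V lab"
    and facet: "F facet_of fan_poly V"
  shows "(\<exists>m. \<forall>v\<in>verts V F. f v = ipair m v) \<longleftrightarrow> phi0 V lab f F = 0"
proof -
  have ext: "\<forall>v\<in>V. rv v extreme_point_of fan_poly V"
    using fano by (simp add: nodal_toric_fano3_def)
  consider "smooth_tri V F" | "node_quad V F"
    using fano facet unfolding nodal_toric_fano3_def by blast
  then show ?thesis
  proof cases
    case 1
    then obtain a b c where abc: "{a, b, c} \<subseteq> V" "F = convex hull (rv ` {a, b, c})"
      "unimodular3 a b c"
      unfolding smooth_tri_def by blast
    then have verts: "verts V F = {a, b, c}"
      using verts_convex_hull[OF ext] by blast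
    have "card {a, b, c} \<noteq> 4"
      by (simp add: card_insert_if)
    then have "phi0 V lab f F = 0"
      using verts by (simp add: phi0_def quads_def)
    moreover obtain m where "ipair m a = f a" "ipair m b = f b" "ipair m c = f c"
      using unimodular3_interpolate[OF abc(3)] by blast
    then have "\<forall>v\<in>verts V F. f v = ipair m v"
      using verts by simp
    ultimately show ?thesis
      by blast
  next
    case 2
    then obtain a b c d where abcd: "{a, b, c, d} \<subseteq> V"
      "F = convex hull (rv ` {a, b, c, d})" "a + c = b + d" "unimodular3 a b c"
      unfolding node_quad_def by blast
    then have verts: "verts V F = {a, b, c, d}"
      using verts_convex_hull[OF ext] by blast
    have "card {a, b, c, d} = 4"
      using distinct_card[OF node_quad_distinct[OF abcd(4,3)]] by simp
    then have quad: "F \<in> quads V"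
      using facet verts unfolding quads_def by simp
    obtain A B C D where ABCD: "lab F = (A, B, C, D)"
      by (metis prod_cases4)
    with labelling quad have "verts V F = {A, B, C, D}" "A + C = B + D"
      unfolding cyclic_labelling_def by fastforce+
    then have "phi0 V lab f F = 0 \<longleftrightarrow> f a + f c = f b + f d"
      using node_quad_alternating_sum_eq_0_iff[OF abcd(4,3), of A B C D f] quad ABCD verts
      by (simp add: phi0_def)
    then show ?thesis
      using linear_on_node_quad_iff[OF abcd(4,3), of f] verts by simp
  qed
qed

lemma cdiv_cones_X_iff_phi0:
  assumes "nodal_toric_fano3 V" "cyclic_labelling V lab" "\<forall>x. x \<notin> V \<longrightarrow> f x = 0"
  shows "f \<in> cdiv V (cones_X V) \<longleftrightarrow> phi0 V lab f = (\<lambda>_. 0)"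
proof -
  have "f \<in> cdiv V (cones_X V) \<longleftrightarrow>
      (\<forall>F. F facet_of fan_poly V \<longrightarrow> (\<exists>m. \<forall>v\<in>verts V F. f v = ipair m v))"
    using assms(3) unfolding cdiv_def cones_X_def by blast
  also have "\<dots> \<longleftrightarrow> (\<forall>F. F facet_of fan_poly V \<longrightarrow> phi0 V lab f F = 0)"
    using facet_linear_iff_phi0[OF assms(1,2)] by blast
  also have "\<dots> \<longleftrightarrow> phi0 V lab f = (\<lambda>_. 0)"
    by (auto simp: phi0_def quads_def fun_eq_iff)
  finally show ?thesis .
qed

lemma cdiv_vanishes_outside: "a \<in> cdiv V C \<Longrightarrow> x \<notin> V \<Longrightarrow> a x = 0"
  unfolding cdiv_def by blast

lemma cdiv_antimono:
  assumes "\<forall>\<sigma>\<in>S. \<exists>\<tau>\<in>C. \<sigma> \<subseteq> \<tau>"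
  shows "cdiv V C \<subseteq> cdiv V S"
proof
  fix f assume f: "f \<in> cdiv V C"
  have "\<exists>m. \<forall>v\<in>\<sigma>. f v = ipair m v" if "\<sigma> \<in> S" for \<sigma>
  proof -
    obtain \<tau> where "\<tau> \<in> C" "\<sigma> \<subseteq> \<tau>"
      using assms \<open>\<sigma> \<in> S\<close> by blast
    moreover obtain m where "\<forall>v\<in>\<tau>. f v = ipair m v"
      using f \<open>\<tau> \<in> C\<close> unfolding cdiv_def by blast
    ultimately show ?thesis
      by blast
  qed
  with f show "f \<in> cdiv V S"
    unfolding cdiv_def by blast
qed

lemma small_res_refines_cones_X:
  assumes "small_res V S"
  shows "\<forall>\<sigma>\<in>S. \<exists>\<tau>\<in>cones_X V. \<sigma> \<subseteq> \<tau>"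
proof
  fix \<sigma> assume "\<sigma> \<in> S"
  moreover have "\<forall>\<sigma>\<in>S. card \<sigma> = 3 \<and> (\<exists>F. F facet_of fan_poly V \<and> \<sigma> \<subseteq> verts V F)"
    using assms unfolding small_res_def by (rule conjunct1)
  ultimately obtain F where "F facet_of fan_poly V" "\<sigma> \<subseteq> verts V F"
    by blast
  then show "\<exists>\<tau>\<in>cones_X V. \<sigma> \<subseteq> \<tau>"
    by (intro bexI[of _ "verts V F"]) (auto simp: cones_X_def)
qed

definition div_class :: "(int^3) set \<Rightarrow> (int^3 \<Rightarrow> int) \<Rightarrow> (int^3 \<Rightarrow> int) set" where
  "div_class V a = (\<lambda>h x. h x + a x) ` princ V"

lemma carrier_pic: "carrier (pic V C) = div_class V ` cdiv V C"
  unfolding pic_def FactGroup_def RCOSETS_def r_coset_def cdiv_grp_def div_class_def by auto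

lemma mult_pic: "P \<otimes>\<^bsub>pic V C\<^esub> Q = (\<Union>u\<in>P. \<Union>w\<in>Q. {\<lambda>x. u x + w x})"
  by (simp add: pic_def FactGroup_def set_mult_def cdiv_grp_def)

lemma carrier_pic_antimono:
  assumes "\<forall>\<sigma>\<in>S. \<exists>\<tau>\<in>C. \<sigma> \<subseteq> \<tau>"
  shows "carrier (pic V C) \<subseteq> carrier (pic V S)"
  using cdiv_antimono[OF assms] unfolding carrier_pic by blast

lemma pic_inclusion_hom:
  assumes "\<forall>\<sigma>\<in>S. \<exists>\<tau>\<in>C. \<sigma> \<subseteq> \<tau>"
  shows "(\<lambda>cls. cls) \<in> hom (pic V C) (pic V S)"
  using carrier_pic_antimono[OF assms] unfolding hom_def mult_pic by auto

lemma zero_in_princ: "(\<lambda>_. 0) \<in> princ V"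
  unfolding princ_def ipair_def by (auto intro: exI[of _ 0])

lemma phi0_add: "phi0 V lab (\<lambda>x. u x + w x) = (\<lambda>F. phi0 V lab u F + phi0 V lab w F)"
  by (auto simp: phi0_def fun_eq_iff split: prod.split)

lemma phi0_princ:
  assumes "cyclic_labelling V lab" "h \<in> princ V"
  shows "phi0 V lab h = (\<lambda>_. 0)"
proof (rule phi0_eq_0_if_linear[OF assms(1)])
  fix F
  obtain m where "\<forall>v\<in>V. h v = ipair m v"
    using assms(2) unfolding princ_def by blast
  then show "\<exists>m. \<forall>v\<in>verts V F. h v = ipair m v"
    unfolding verts_def by blast
qed

lemma phi_eqI:
  assumes "u \<in> P" "\<And>u. u \<in> P \<Longrightarrow> phi0 V lab u = c"
  shows "phi V lab P = c"
proof -
  have "(SOME u. u \<in> P) \<in> P"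
    using assms(1) by (rule someI[where P = "\<lambda>u. u \<in> P"])
  then show ?thesis
    unfolding phi_def by (rule assms(2))
qed

lemma phi_div_class:
  assumes "cyclic_labelling V lab"
  shows "phi V lab (div_class V a) = phi0 V lab a"
proof (rule phi_eqI)
  show "a \<in> div_class V a"
    using zero_in_princ unfolding div_class_def by force
  show "phi0 V lab u = phi0 V lab a" if "u \<in> div_class V a" for u
    using that phi0_princ[OF assms] unfolding div_class_def by (auto simp: phi0_add)
qed

lemma phi_mult_div_class:
  assumes "cyclic_labelling V lab"
  shows "phi V lab (div_class V a \<otimes>\<^bsub>pic V C\<^esub> div_class V b)
    = (\<lambda>F. phi0 V lab a F + phi0 V lab b F)"
proof (rule phi_eqI)
  show "(\<lambda>x. a x + b x) \<in> div_class V a \<otimes>\<^bsub>pic V C\<^esub> div_class V b"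
    using zero_in_princ unfolding mult_pic div_class_def by force
  show "phi0 V lab u = (\<lambda>F. phi0 V lab a F + phi0 V lab b F)"
    if "u \<in> div_class V a \<otimes>\<^bsub>pic V C\<^esub> div_class V b" for u
    using that phi0_princ[OF assms] unfolding mult_pic div_class_def
    by (auto simp: phi0_add)
qed

lemma phi_hom:
  assumes "cyclic_labelling V lab"
  shows "phi V lab \<in> hom (pic V C) (zquads V)"
proof (rule homI)
  show "phi V lab P \<in> carrier (zquads V)" for P
    by (simp add: zquads_def phi_def phi0_def)
  show "phi V lab (P \<otimes>\<^bsub>pic V C\<^esub> Q) = phi V lab P \<otimes>\<^bsub>zquads V\<^esub> phi V lab Q"
    if "P \<in> carrier (pic V C)" "Q \<in> carrier (pic V C)" for P Q
    using that phi_mult_div_class[OF assms] phi_div_class[OF assms]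
    unfolding carrier_pic by (auto simp: zquads_def)
qed

lemma kernel_phi:
  assumes "nodal_toric_fano3 V" "small_res V S" "cyclic_labelling V lab"
  shows "kernel (pic V S) (zquads V) (phi V lab) = carrier (pic V (cones_X V))"
proof -
  have cartier_iff: "a \<in> cdiv V (cones_X V) \<longleftrightarrow> phi0 V lab a = (\<lambda>_. 0)"
    if "a \<in> cdiv V S" for a
    using cdiv_cones_X_iff_phi0[OF assms(1,3)] cdiv_vanishes_outside[OF that] by blast
  have "kernel (pic V S) (zquads V) (phi V lab)
      = div_class V ` {a \<in> cdiv V S. phi0 V lab a = (\<lambda>_. 0)}"
    by (auto simp: kernel_def carrier_pic zquads_def phi_div_class[OF assms(3)])
  also have "{a \<in> cdiv V S. phi0 V lab a = (\<lambda>_. 0)} = cdiv V (cones_X V)"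
    using cartier_iff cdiv_antimono[OF small_res_refines_cones_X[OF assms(2)]] by blast
  finally show ?thesis
    unfolding carrier_pic .
qed

theorem lemma3p4:
  fixes V :: "(int^3) set" and S :: "(int^3) set set"
    and lab :: "(real^3) set \<Rightarrow> (int^3) \<times> (int^3) \<times> (int^3) \<times> (int^3)"
  assumes "nodal_toric_fano3 V"
    and "small_res V S"
    and "cyclic_labelling V lab"
  shows "(\<lambda>cls. cls) \<in> hom (pic V (cones_X V)) (pic V S)
    \<and> inj_on (\<lambda>cls. cls) (carrier (pic V (cones_X V)))
    \<and> phi V lab \<in> hom (pic V S) (zquads V)
    \<and> kernel (pic V S) (zquads V) (phi V lab) = (\<lambda>cls. cls) ` carrier (pic V (cones_X V))"
  using pic_inclusion_hom[OF small_res_refines_cones_X[OF assms(2)]]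
    phi_hom[OF assms(3)] kernel_phi[OF assms]
  by simp

end
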